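(* Let $f\in\mathcal{F}_k$. For all $p\in\Delta_\mathcal{Y}$ and $r\in\mathcal{Y}$, $\Gamma(p\odot r)=\Gamma(p)\odot r$, where $\Gamma(q)=\arg\min_{u\in\mathbb{R}^k}\sum_{y\in\mathcal{Y}}q_yL^f(u,y)$ and $p\odot r\in\Delta_\mathcal{Y}$ is defined by $(p\odot r)_y=p_{y\odot r}$.
   Context: $[k]=\{1,\dots,k\}$, $\mathcal{Y}=\{-1,1\}^k$, $\Delta_\mathcal{Y}$ the distributions on $\mathcal{Y}$; $u\odot u'$ entrywise product (extended to sets elementwise), $\mathbbm{1}$ all-ones, $(x)_+$ entrywise positive part. $\mathcal{F}_k$: submodular, increasing, normalized set functions $f:2^{[k]}\to\mathbb{R}$. Lovász extension $F(x)=\max_\pi\sum_{i=1}^kx_{\pi_i}(f(\{\pi_1,..,\pi_i\})-f(\{\pi_1,..,\pi_{i-1}\}))$ for $x\in\mathbb{R}^k_+$; Lovász hinge $L^f(u,y)=F((\mathbbm{1}-u\odot y)_+)$. *)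

theory Defs
  imports "HOL-Analysis.Analysis"
begin

text \<open>Index set [k] is the finite type 'n; vectors in R^k are real^'n.\<close>

definition ewprod :: "real^'n \<Rightarrow> real^'n \<Rightarrow> real^'n" (infixl "\<odot>" 70) where
  "u \<odot> v = (\<chi> i. u $ i * v $ i)"

definition labels :: "(real^'n) set" where
  "labels = {y. \<forall>i. y $ i \<in> {-1, 1}}"

definition distributions :: "((real^'n) \<Rightarrow> real) set" where
  "distributions = {p. (\<forall>y\<in>labels. 0 \<le> p y) \<and> (\<Sum>y\<in>labels. p y) = 1}"

definition submodular_set_fun :: "('n set \<Rightarrow> real) \<Rightarrow> bool" where
  "submodular_set_fun f \<longleftrightarrow> (\<forall>A B. f (A \<union> B) + f (A \<inter> B) \<le> f A + f B)"

definition increasing_set_fun :: "('n set \<Rightarrow> real) \<Rightarrow> bool" where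
  "increasing_set_fun f \<longleftrightarrow> (\<forall>A B. A \<subseteq> B \<longrightarrow> f A \<le> f B)"

definition normalized_set_fun :: "('n set \<Rightarrow> real) \<Rightarrow> bool" where
  "normalized_set_fun f \<longleftrightarrow> f {} = 0"

definition F_class :: "('n::finite set \<Rightarrow> real) set" where
  "F_class = {f. submodular_set_fun f \<and> increasing_set_fun f \<and> normalized_set_fun f}"

definition lovasz_ext :: "('n::finite set \<Rightarrow> real) \<Rightarrow> real^'n \<Rightarrow> real" where
  "lovasz_ext f x = Max {(\<Sum>i<CARD('n). x $ (\<pi> ! i) *
        (f (set (take (Suc i) \<pi>)) - f (set (take i \<pi>)))) | \<pi>. distinct \<pi> \<and> set \<pi> = UNIV}"

definition pos_part :: "real^'n \<Rightarrow> real^'n" where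
  "pos_part x = (\<chi> i. max (x $ i) 0)"

definition lovasz_hinge :: "('n::finite set \<Rightarrow> real) \<Rightarrow> real^'n \<Rightarrow> real^'n \<Rightarrow> real" where
  "lovasz_hinge f u y = lovasz_ext f (pos_part (1 - u \<odot> y))"

definition Gamma :: "('n::finite set \<Rightarrow> real) \<Rightarrow> (real^'n \<Rightarrow> real) \<Rightarrow> (real^'n) set" where
  "Gamma f q = {u. \<forall>v. (\<Sum>y\<in>labels. q y * lovasz_hinge f u y) \<le> (\<Sum>y\<in>labels. q y * lovasz_hinge f v y)}"

definition dist_flip :: "(real^'n \<Rightarrow> real) \<Rightarrow> real^'n \<Rightarrow> (real^'n \<Rightarrow> real)" where
  "dist_flip p r = (\<lambda>y. p (y \<odot> r))"

end

theory Submission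
  imports Defs
begin

text \<open>Flipping the signs of the labels by \<open>r\<close> is an involution of \<open>labels\<close>, and the hinge only
  sees \<open>u\<close> and \<open>y\<close> through \<open>u \<odot> y = (u \<odot> r) \<odot> (y \<odot> r)\<close>. Reindexing the expected loss along
  this involution shows that the risk of \<open>u\<close> under \<open>p \<odot> r\<close> is the risk of \<open>u \<odot> r\<close> under \<open>p\<close>,
  so the minimisers correspond under \<open>u \<mapsto> u \<odot> r\<close>.\<close>

lemma ewprod_assoc: "a \<odot> b \<odot> c = a \<odot> (b \<odot> c)"
  by (simp add: ewprod_def vec_eq_iff mult.assoc)

lemma ewprod_commute: "a \<odot> b = b \<odot> a"
  by (simp add: ewprod_def vec_eq_iff mult.commute)

lemma ewprod_label_self:
  assumes "r \<in> labels"
  shows "r \<odot> r = 1"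
proof -
  have "r $ i * r $ i = 1" for i
    using assms by (auto simp: labels_def dest: spec[of _ i])
  then show ?thesis
    by (simp add: ewprod_def vec_eq_iff)
qed

lemma ewprod_label_cancel [simp]: "r \<in> labels \<Longrightarrow> u \<odot> r \<odot> r = u"
  by (simp only: ewprod_assoc ewprod_label_self) (simp add: ewprod_def vec_eq_iff)

lemma ewprod_labels_closed:
  assumes "y \<in> labels" and "r \<in> labels"
  shows "y \<odot> r \<in> labels"
proof -
  have "y $ i * r $ i \<in> {-1, 1}" for i
  proof -
    have "y $ i \<in> {-1, 1}" and "r $ i \<in> {-1, 1}"
      using assms by (simp_all add: labels_def)
    then show ?thesis
      by auto
  qed
  then show ?thesis
    by (simp add: labels_def ewprod_def)
qed

lemma sum_labels_reindex_ewprod: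
  assumes "r \<in> labels"
  shows "(\<Sum>y\<in>labels. g (y \<odot> r)) = (\<Sum>y\<in>labels. g y)"
  by (rule sum.reindex_bij_witness[where i="\<lambda>y. y \<odot> r" and j="\<lambda>y. y \<odot> r"])
     (simp_all add: assms ewprod_labels_closed)

lemma lovasz_hinge_ewprod: "lovasz_hinge f u (y \<odot> r) = lovasz_hinge f (u \<odot> r) y"
  by (simp add: lovasz_hinge_def ewprod_assoc ewprod_commute[of r y])

definition lovasz_risk :: "('n::finite set \<Rightarrow> real) \<Rightarrow> (real^'n \<Rightarrow> real) \<Rightarrow> real^'n \<Rightarrow> real" where
  "lovasz_risk f q u = (\<Sum>y\<in>labels. q y * lovasz_hinge f u y)"

lemma Gamma_eq_risk_minimisers: "Gamma f q = {u. \<forall>v. lovasz_risk f q u \<le> lovasz_risk f q v}"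
  by (simp add: Gamma_def lovasz_risk_def)

lemma lovasz_risk_dist_flip:
  assumes "r \<in> labels"
  shows "lovasz_risk f (dist_flip p r) u = lovasz_risk f p (u \<odot> r)"
proof -
  have "lovasz_risk f (dist_flip p r) u = (\<Sum>y\<in>labels. p (y \<odot> r) * lovasz_hinge f u y)"
    by (simp add: lovasz_risk_def dist_flip_def)
  also have "\<dots> = (\<Sum>y\<in>labels. p (y \<odot> r \<odot> r) * lovasz_hinge f u (y \<odot> r))"
    using sum_labels_reindex_ewprod[OF assms, symmetric] .
  also have "\<dots> = lovasz_risk f p (u \<odot> r)"
    by (simp add: assms lovasz_risk_def lovasz_hinge_ewprod)
  finally show ?thesis .
qed

lemma Gamma_dist_flip_iff:
  assumes "r \<in> labels"
  shows "u \<in> Gamma f (dist_flip p r) \<longleftrightarrow> u \<odot> r \<in> Gamma f p"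
proof -
  have "u \<in> Gamma f (dist_flip p r) \<longleftrightarrow> (\<forall>v. lovasz_risk f p (u \<odot> r) \<le> lovasz_risk f p (v \<odot> r))"
    by (simp add: Gamma_eq_risk_minimisers lovasz_risk_dist_flip assms)
  also have "\<dots> \<longleftrightarrow> (\<forall>v. lovasz_risk f p (u \<odot> r) \<le> lovasz_risk f p v)"
    by (metis assms ewprod_label_cancel)
  finally show ?thesis
    by (simp add: Gamma_eq_risk_minimisers)
qed

theorem lemma7:
  fixes f :: "'n::finite set \<Rightarrow> real"
  assumes "f \<in> F_class"
    and "p \<in> distributions"
    and "r \<in> labels"
  shows "Gamma f (dist_flip p r) = (\<lambda>u. u \<odot> r) ` Gamma f p"
proof (rule set_eqI)
  fix u
  have "u \<in> (\<lambda>u. u \<odot> r) ` Gamma f p \<longleftrightarrow> u \<odot> r \<in> Gamma f p"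
    using assms(3) by (auto intro: image_eqI[where x="u \<odot> r"])
  then show "u \<in> Gamma f (dist_flip p r) \<longleftrightarrow> u \<in> (\<lambda>u. u \<odot> r) ` Gamma f p"
    using Gamma_dist_flip_iff[OF assms(3)] by simp
qed

end
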